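(* For all integers $n\geq 1$ and $0\leq k\leq n-1$, $$Q_{n,k}(x-t-1,t)=\sum_{T\in \mathcal P_{n,k}}x^{\mathrm{young}_T(1)}\,t^{\mathrm{eld}(T)}.$$
   Context: Define polynomials $Q_n(x,y,z,t)$ by $Q_1=1$ and $Q_{n+1}=[x+nz+(y+t)(n+y\partial_y)]Q_n$ for $n\ge1$, and define $Q_{n,k}(x,t)$ by $Q_n(x,y,1,t)=\sum_{k=0}^{n-1}Q_{n,k}(x,t)y^k$. All trees are rooted trees whose vertices are labeled by distinct positive integers. A vertex $j$ is a descendant of $i$ if the path from the root to $j$ passes through $i$ (every vertex is a descendant of itself); $\beta_T(i)$ is the smallest descendant of $i$ in $T$. If $j$ is a descendant of $i$ joined to $i$ by an edge, $j$ is a child of $i$ and the edge is written $(i,j)$; two children of the same vertex are brothers. A plane tree is a rooted tree in which the children of each vertex are linearly ordered (left to right). In a plane tree $T$, a vertex $j$ is elder if it has a brother $k$ to its right with $\beta_T(k)<\beta_T(j)$; otherwise $j$ is younger. $\mathrm{eld}_T(v)$ is the number of elder children of $v$, $\mathrm{eld}(T)$ is the total number of elder vertices of $T$, $\deg_T(v)$ is the number of children of $v$, and $\mathrm{young}_T(v)=\deg_T(v)-\mathrm{eld}_T(v)$. An edge $(i,j)$ is proper if $j$ is an elder child of $i$ or $i<\beta_T(j)$; otherwise it is improper. $\mathcal P_{n,k}$ denotes the set of plane trees on vertex set $[n]=\{1,\dots,n\}$ (with arbitrary root) having exactly $k$ improper edges; $\mathrm{young}_T(1)$ refers to the vertex labeled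 $1$. *)

theory Defs
  imports "HOL-Computational_Algebra.Polynomial"
begin

text \<open>For fixed values of x, z, t, the polynomial Q_n(x,y,z,t) is represented as a
  univariate polynomial in y (type real poly).  The recurrence
  Q_{n+1} = [x + n z + (y+t)(n + y d/dy)] Q_n is transcribed literally.\<close>

fun Qy :: "nat \<Rightarrow> real \<Rightarrow> real \<Rightarrow> real \<Rightarrow> real poly" where
  "Qy 0 x z t = 0"
| "Qy (Suc 0) x z t = 1"
| "Qy (Suc (Suc m)) x z t =
     (let n = Suc m; Q = Qy n x z t in
      smult (x + real n * z) Q + [:t, 1:] * (smult (real n) Q + [:0, 1:] * pderiv Q))"

definition Qnk :: "nat \<Rightarrow> nat \<Rightarrow> real \<Rightarrow> real \<Rightarrow> real" where
  "Qnk n k x t = coeff (Qy n x 1 t) k"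

datatype ptree = PNode nat "ptree list"

fun root :: "ptree \<Rightarrow> nat" where "root (PNode v cs) = v"
fun kids :: "ptree \<Rightarrow> ptree list" where "kids (PNode v cs) = cs"

fun labels :: "ptree \<Rightarrow> nat list" where
  "labels (PNode v cs) = v # concat (map labels cs)"

fun subtrees :: "ptree \<Rightarrow> ptree list" where
  "subtrees (PNode v cs) = PNode v cs # concat (map subtrees cs)"

definition beta :: "ptree \<Rightarrow> nat" where
  "beta s = Min (set (labels s))"

definition is_elder :: "ptree list \<Rightarrow> nat \<Rightarrow> bool" where
  "is_elder cs i \<longleftrightarrow> (\<exists>j. i < j \<and> j < length cs \<and> beta (cs ! j) < beta (cs ! i))"

definition eld_node :: "ptree list \<Rightarrow> nat" where
  "eld_node cs = card {i. i < length cs \<and> is_elder cs i}"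

definition eld :: "ptree \<Rightarrow> nat" where
  "eld T = sum_list (map (\<lambda>s. eld_node (kids s)) (subtrees T))"

definition young_at :: "ptree \<Rightarrow> nat \<Rightarrow> nat" where
  "young_at T v = sum_list (map (\<lambda>s. if root s = v then length (kids s) - eld_node (kids s) else 0)
                                 (subtrees T))"

definition improper_node :: "nat \<Rightarrow> ptree list \<Rightarrow> nat" where
  "improper_node v cs = card {i. i < length cs \<and> \<not> is_elder cs i \<and> \<not> v < beta (cs ! i)}"

definition improper :: "ptree \<Rightarrow> nat" where
  "improper T = sum_list (map (\<lambda>s. improper_node (root s) (kids s)) (subtrees T))"

definition P :: "nat \<Rightarrow> nat \<Rightarrow> ptree set" where
  "P n k = {T. distinct (labels T) \<and> set (labels T) = {1..n} \<and> improper T = k}"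

end

theory Submission
  imports Defs "HOL-Library.Multiset"
begin

text \<open>Let \<open>G\<^sub>n(y)\<close> be the sum of \<open>x^young_T(1) t^eld(T) y^k\<close> over all plane trees \<open>T\<close> on \<open>[n]\<close>
  with \<open>k\<close> improper edges.  Every plane tree on \<open>[n+1]\<close> arises from exactly one plane tree on
  \<open>[n]\<close> by inserting the vertex \<open>N = n+1\<close>, and deleting \<open>N\<close> undoes the insertion.  There are
  three kinds of insertion at a vertex \<open>v\<close> of a tree: \<open>N\<close> becomes a new root above the subtree
  of \<open>v\<close> (one more improper edge, factor \<open>y\<close>); \<open>N\<close> becomes a leaf child of \<open>v\<close> (factor
  \<open>x\<close> or \<open>1\<close> if it is the rightmost child, since it is then young, and \<open>t\<close> otherwise, since
  it is then elder); or \<open>N\<close> splits an improper edge from \<open>v\<close> (factor \<open>y\<close> or \<open>t\<close>, according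
  to the order of its last two children).  Summing over all insertions, a tree \<open>T\<close> on \<open>[n]\<close>
  contributes its own weight times \<open>x + (n - 1)(1 + t) + n y + (y + t) k\<close>, and since \<open>y d/dy\<close>
  multiplies the weight by \<open>k\<close>,
  \<open>G\<^bsub>n+1\<^esub> = (x - t - 1 + n) G\<^sub>n + (y + t) (n G\<^sub>n + y G\<^sub>n')\<close>.
  This is the recurrence defining \<open>Q\<^bsub>n+1\<^esub>(x - t - 1, y, 1, t)\<close>, so the two polynomials agree, and
  the theorem compares the coefficients of \<open>y^k\<close>.\<close>

lemma sum_list_concat: "sum_list (concat xss) = sum_list (map sum_list xss)"
  by (induction xss) auto

lemma set_drop_conv_nth: "set (drop n xs) = {xs ! j | j. n \<le> j \<and> j < length xs}"
proof safe
  fix x assume "x \<in> set (drop n xs)"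
  then obtain k where "k < length xs - n" "x = xs ! (n + k)" by (auto simp: in_set_conv_nth)
  then show "\<exists>j. x = xs ! j \<and> n \<le> j \<and> j < length xs" by (intro exI[of _ "n + k"]) auto
next
  fix j assume "n \<le> j" "j < length xs"
  then show "xs ! j \<in> set (drop n xs)"
    using nth_drop[of n xs "j - n"] by (simp add: in_set_conv_nth) (metis diff_less_mono le_add_diff_inverse)
qed

lemma ex_take_drop_iff: "(\<exists>i\<le>length xs. R (take i xs) (drop i xs)) \<longleftrightarrow> (\<exists>A B. xs = A @ B \<and> R A B)"
proof
  assume "\<exists>i\<le>length xs. R (take i xs) (drop i xs)"
  then show "\<exists>A B. xs = A @ B \<and> R A B" by (metis append_take_drop_id)
next
  assume "\<exists>A B. xs = A @ B \<and> R A B"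
  then obtain A B where "xs = A @ B" "R A B" by blast
  then show "\<exists>i\<le>length xs. R (take i xs) (drop i xs)" by (intro exI[of _ "length A"]) auto
qed

lemma ex_take_nth_drop_iff:
  "(\<exists>i<length xs. R (take i xs) (xs ! i) (drop (Suc i) xs)) \<longleftrightarrow> (\<exists>A c B. xs = A @ c # B \<and> R A c B)"
proof
  assume "\<exists>i<length xs. R (take i xs) (xs ! i) (drop (Suc i) xs)"
  then show "\<exists>A c B. xs = A @ c # B \<and> R A c B" by (metis id_take_nth_drop)
next
  assume "\<exists>A c B. xs = A @ c # B \<and> R A c B"
  then obtain A c B where "xs = A @ c # B" "R A c B" by blast
  then show "\<exists>i<length xs. R (take i xs) (xs ! i) (drop (Suc i) xs)" by (intro exI[of _ "length A"]) auto
qed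

lemma concat_map_eq_self: "(\<And>c. c \<in> set cs \<Longrightarrow> f c = [c]) \<Longrightarrow> concat (map f cs) = cs"
  by (induction cs) auto

lemma distinct_concat_map:
  "distinct xs \<Longrightarrow> (\<And>i. i \<in> set xs \<Longrightarrow> distinct (f i)) \<Longrightarrow>
   (\<And>i j. i \<in> set xs \<Longrightarrow> j \<in> set xs \<Longrightarrow> i \<noteq> j \<Longrightarrow> set (f i) \<inter> set (f j) = {}) \<Longrightarrow>
   distinct (concat (map f xs))"
proof (induction xs)
  case (Cons a xs)
  have "set (f a) \<inter> set (concat (map f xs)) = {}"
    using Cons.prems(1,3) by fastforce
  then show ?case using Cons by (auto simp: distinct_append)
qed simp

lemma prod_list_map_monom:
  "prod_list (map (\<lambda>c. monom (f c) (g c)) cs) = monom (prod_list (map f cs)) (sum_list (map g cs))"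
  by (induction cs) (auto simp: mult_monom)

lemma prod_list_map_power_mult:
  "prod_list (map (\<lambda>c. (x::'a::comm_monoid_mult) ^ f c * t ^ g c) cs) =
     x ^ sum_list (map f cs) * t ^ sum_list (map g cs)"
  by (induction cs) (auto simp: power_add mult_ac)

lemma smult_sum_right: "smult c (sum f A) = (\<Sum>x\<in>A. smult c (f x))"
  by (induction A rule: infinite_finite_induct) (auto simp: smult_add_right)

lemma pderiv_sum: "pderiv (sum f A) = (\<Sum>x\<in>A. pderiv (f x))"
  by (induction A rule: infinite_finite_induct) (auto simp: pderiv_add)

fun count_tail :: "('a \<Rightarrow> 'a list \<Rightarrow> bool) \<Rightarrow> 'a list \<Rightarrow> nat" where
  "count_tail Q [] = 0"
| "count_tail Q (b # bs) = (if Q b bs then 1 else 0) + count_tail Q bs"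

lemma card_eq_count_tail:
  "card {i. i < length bs \<and> Q (bs ! i) (drop (Suc i) bs)} = count_tail Q bs"
proof (induction bs)
  case (Cons b bs)
  have "{i. i < length (b # bs) \<and> Q ((b # bs) ! i) (drop (Suc i) (b # bs))}
     = (if Q b bs then {0} else {}) \<union> Suc ` {i. i < length bs \<and> Q (bs ! i) (drop (Suc i) bs)}"
    by (auto simp: image_iff less_Suc_eq_0_disj)
  then show ?case
    using Cons by (auto simp: card_insert_if card_image)
qed simp

lemma count_tail_append:
  "count_tail Q (xs @ ys) = count_tail (\<lambda>b r. Q b (r @ ys)) xs + count_tail Q ys"
  by (induction xs) auto

lemma count_tail_cong:
  "(\<And>b r. b \<in> set xs \<Longrightarrow> set r \<subseteq> set xs \<Longrightarrow> Q b r = Q' b r) \<Longrightarrow> count_tail Q xs = count_tail Q' xs"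
  by (induction xs) auto

lemma count_tail_le_length: "count_tail Q xs \<le> length xs"
  by (induction xs) auto

section \<open>Weights of plane trees\<close>

lemma labels_not_Nil: "labels s \<noteq> []"
  by (cases s) auto

lemma beta_in_labels: "beta s \<in> set (labels s)"
  unfolding beta_def using labels_not_Nil by (simp add: Min_in)

lemma beta_le: "l \<in> set (labels s) \<Longrightarrow> beta s \<le> l"
  unfolding beta_def by simp

lemma beta_eqI: "b \<in> set (labels s) \<Longrightarrow> (\<And>l. l \<in> set (labels s) \<Longrightarrow> b \<le> l) \<Longrightarrow> beta s = b"
  by (meson beta_in_labels beta_le le_antisym)

lemma beta_PNode_le_child: "c \<in> set cs \<Longrightarrow> beta (PNode v cs) \<le> beta c"
  using beta_in_labels[of c] beta_le[of "beta c" "PNode v cs"] by auto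

lemma beta_PNode_le_root: "beta (PNode v cs) \<le> v"
  using beta_le[of v "PNode v cs"] by simp

lemma beta_leaf: "beta (PNode v []) = v"
  unfolding beta_def by simp

lemma distinct_labels_child:
  assumes "distinct (labels (PNode v cs))" and "c \<in> set cs"
  shows "distinct (labels c) \<and> v \<notin> set (labels c)"
proof -
  obtain A B where "cs = A @ c # B" using assms(2) by (meson split_list)
  then show ?thesis using assms(1) by (auto simp: distinct_append)
qed

text \<open>A child with beta \<open>b\<close> whose right brothers have betas \<open>r\<close> is elder iff \<open>has_smaller b r\<close>;
  its edge to the parent \<open>v\<close> is improper iff \<open>is_improper v b r\<close>.\<close>

definition has_smaller :: "nat \<Rightarrow> nat list \<Rightarrow> bool" where
  "has_smaller b r \<longleftrightarrow> (\<exists>c\<in>set r. c < b)"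

definition is_improper :: "nat \<Rightarrow> nat \<Rightarrow> nat list \<Rightarrow> bool" where
  "is_improper v b r \<longleftrightarrow> \<not> has_smaller b r \<and> \<not> v < b"

lemma is_elder_iff_has_smaller:
  assumes "i < length cs"
  shows "is_elder cs i \<longleftrightarrow> has_smaller (map beta cs ! i) (drop (Suc i) (map beta cs))"
  using assms unfolding is_elder_def has_smaller_def set_drop_conv_nth
  by (auto simp: Suc_le_eq)

lemma eld_node_eq_count_tail: "eld_node cs = count_tail has_smaller (map beta cs)"
  unfolding eld_node_def card_eq_count_tail[symmetric]
  by (rule arg_cong[where f = card]) (auto simp: is_elder_iff_has_smaller)

lemma improper_node_eq_count_tail: "improper_node v cs = count_tail (is_improper v) (map beta cs)"
  unfolding improper_node_def card_eq_count_tail[symmetric]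
  by (rule arg_cong[where f = card]) (auto simp: is_elder_iff_has_smaller is_improper_def)

lemma eld_PNode: "eld (PNode v cs) = eld_node cs + sum_list (map eld cs)"
  unfolding eld_def by (simp add: map_concat sum_list_concat comp_def)

lemma improper_PNode: "improper (PNode v cs) = improper_node v cs + sum_list (map improper cs)"
  unfolding improper_def by (simp add: map_concat sum_list_concat comp_def)

lemma young_at_PNode: "young_at (PNode v cs) u =
   (if v = u then length cs - eld_node cs else 0) + sum_list (map (\<lambda>c. young_at c u) cs)"
  unfolding young_at_def by (simp add: map_concat sum_list_concat comp_def)

definition node_weight :: "real \<Rightarrow> real \<Rightarrow> nat \<Rightarrow> nat list \<Rightarrow> real poly" where
  "node_weight x t v bs =
     monom ((if v = 1 then x ^ (length bs - count_tail has_smaller bs) else 1) * t ^ count_tail has_smaller bs)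
       (count_tail (is_improper v) bs)"

definition tree_weight :: "real \<Rightarrow> real \<Rightarrow> ptree \<Rightarrow> real poly" where
  "tree_weight x t T = monom (x ^ young_at T 1 * t ^ eld T) (improper T)"

lemma tree_weight_PNode:
  "tree_weight x t (PNode v cs) = node_weight x t v (map beta cs) * prod_list (map (tree_weight x t) cs)"
  unfolding tree_weight_def prod_list_map_monom prod_list_map_power_mult
  by (simp add: node_weight_def mult_monom eld_PNode improper_PNode young_at_PNode
      eld_node_eq_count_tail improper_node_eq_count_tail power_add mult_ac add_ac)

lemma node_weight_Nil: "v \<noteq> 1 \<Longrightarrow> node_weight x t v [] = 1"
  by (simp add: node_weight_def)

lemma count_tail_insert_max:
  assumes xs: "\<forall>b\<in>set xs. b < N" and ys: "\<forall>b\<in>set ys. b < N" and v: "v < N"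
  shows "count_tail has_smaller (xs @ N # ys) = count_tail has_smaller (xs @ ys) + (if ys = [] then 0 else 1)"
    and "count_tail (is_improper v) (xs @ N # ys) = count_tail (is_improper v) (xs @ ys)"
proof -
  have "count_tail (\<lambda>b r. has_smaller b (r @ N # ys)) xs = count_tail (\<lambda>b r. has_smaller b (r @ ys)) xs"
    by (rule count_tail_cong) (use xs in \<open>auto simp: has_smaller_def\<close>)
  moreover have "has_smaller N ys \<longleftrightarrow> ys \<noteq> []"
    using ys by (cases ys) (auto simp: has_smaller_def)
  ultimately show "count_tail has_smaller (xs @ N # ys) = count_tail has_smaller (xs @ ys) + (if ys = [] then 0 else 1)"
    by (simp add: count_tail_append)
  have "count_tail (\<lambda>b r. is_improper v b (r @ N # ys)) xs = count_tail (\<lambda>b r. is_improper v b (r @ ys)) xs"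
    by (rule count_tail_cong) (use xs in \<open>auto simp: has_smaller_def is_improper_def\<close>)
  moreover have "\<not> is_improper v N ys" using v by (simp add: is_improper_def)
  ultimately show "count_tail (is_improper v) (xs @ N # ys) = count_tail (is_improper v) (xs @ ys)"
    by (simp add: count_tail_append)
qed

lemma node_weight_insert_max:
  assumes "\<forall>b\<in>set xs. b < N" "\<forall>b\<in>set ys. b < N" "v < N"
  shows "node_weight x t v (xs @ N # ys) =
    smult (if ys = [] then (if v = 1 then x else 1) else t) (node_weight x t v (xs @ ys))"
proof -
  note count = count_tail_insert_max[OF assms]
  have le: "count_tail has_smaller (xs @ ys) \<le> length (xs @ ys)" by (rule count_tail_le_length)
  show ?thesis
  proof (cases "ys = []")
    case True
    then have "length (xs @ N # ys) - count_tail has_smaller (xs @ N # ys) =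
        Suc (length (xs @ ys) - count_tail has_smaller (xs @ ys))"
      using count(1) le by simp
    then show ?thesis using True count by (simp add: node_weight_def smult_monom)
  next
    case False
    then have "length (xs @ N # ys) - count_tail has_smaller (xs @ N # ys) =
        length (xs @ ys) - count_tail has_smaller (xs @ ys)"
      using count(1) le by simp
    then show ?thesis using False count by (simp add: node_weight_def smult_monom mult_ac)
  qed
qed

lemma count_tail_split:
  assumes xs: "\<forall>b\<in>set xs. b < N" and ys: "\<forall>b\<in>set ys. bc < b"
    and "bc < v" "bc < bv" "bc < N" "bv < N"
  shows "count_tail has_smaller (xs @ [bc, bv]) + count_tail has_smaller ys =
           count_tail has_smaller (xs @ bc # ys)" (is ?elder)
    and "count_tail (is_improper N) (xs @ [bc, bv]) + count_tail (is_improper v) ys =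
           Suc (count_tail (is_improper v) (xs @ bc # ys))" (is ?improper)
    and "count_tail has_smaller (xs @ [bv, bc]) + count_tail has_smaller ys =
           Suc (count_tail has_smaller (xs @ bc # ys))" (is ?elder_swapped)
    and "count_tail (is_improper N) (xs @ [bv, bc]) + count_tail (is_improper v) ys =
           count_tail (is_improper v) (xs @ bc # ys)" (is ?improper_swapped)
proof -
  have elder: "count_tail (\<lambda>b r. has_smaller b (r @ [bc, bv])) xs = count_tail (\<lambda>b r. has_smaller b (r @ bc # ys)) xs"
    "count_tail (\<lambda>b r. has_smaller b (r @ [bv, bc])) xs = count_tail (\<lambda>b r. has_smaller b (r @ bc # ys)) xs"
    by (rule count_tail_cong; use assms in \<open>auto simp: has_smaller_def\<close>)+
  have improper:
    "count_tail (\<lambda>b r. is_improper N b (r @ [bc, bv])) xs = count_tail (\<lambda>b r. is_improper v b (r @ bc # ys)) xs"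
    "count_tail (\<lambda>b r. is_improper N b (r @ [bv, bc])) xs = count_tail (\<lambda>b r. is_improper v b (r @ bc # ys)) xs"
    by (rule count_tail_cong; use assms in \<open>auto simp: is_improper_def has_smaller_def\<close>)+
  have "\<not> has_smaller bc ys" "is_improper v bc ys"
    using assms by (auto simp: is_improper_def has_smaller_def)
  moreover have "\<not> has_smaller bc [bv]" "has_smaller bv [bc]" "\<And>b. \<not> has_smaller b []"
    "is_improper N bc [bv]" "is_improper N bv []" "\<not> is_improper N bv [bc]" "is_improper N bc []"
    using assms by (auto simp: is_improper_def has_smaller_def)
  ultimately show ?elder and ?improper and ?elder_swapped and ?improper_swapped
    by (simp_all add: count_tail_append elder improper)
qed

lemma node_weight_split:
  assumes "\<forall>b\<in>set xs. b < N" "\<forall>b\<in>set ys. bc < b" "bc < v" "bc < bv" "bc < N" "bv < N"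
    and "v \<noteq> 1" "N \<noteq> 1"
  shows "node_weight x t N (xs @ [bc, bv]) * node_weight x t v ys = [:0, 1:] * node_weight x t v (xs @ bc # ys)"
    and "node_weight x t N (xs @ [bv, bc]) * node_weight x t v ys = smult t (node_weight x t v (xs @ bc # ys))"
proof -
  note count = count_tail_split[OF assms(1-6)]
  have "[:0, 1:] = monom (1::real) 1" by (simp add: monom_Suc)
  then show "node_weight x t N (xs @ [bc, bv]) * node_weight x t v ys = [:0, 1:] * node_weight x t v (xs @ bc # ys)"
    using assms(7,8) by (simp add: node_weight_def mult_monom power_add[symmetric] count(1,2))
  show "node_weight x t N (xs @ [bv, bc]) * node_weight x t v ys = smult t (node_weight x t v (xs @ bc # ys))"
    using assms(7,8) by (simp add: node_weight_def mult_monom smult_monom power_add[symmetric] count(3,4))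
qed

section \<open>Inserting the largest label\<close>

definition leaf_insertions :: "nat \<Rightarrow> nat \<Rightarrow> ptree list \<Rightarrow> ptree list" where
  "leaf_insertions N v cs = map (\<lambda>i. PNode v (take i cs @ PNode N [] # drop i cs)) [0..<Suc (length cs)]"

definition improper_child :: "nat \<Rightarrow> ptree list \<Rightarrow> nat \<Rightarrow> bool" where
  "improper_child v cs i \<longleftrightarrow> \<not> is_elder cs i \<and> \<not> v < beta (cs ! i)"

lemma improper_child_iff:
  "i < length cs \<Longrightarrow> improper_child v cs i \<longleftrightarrow> is_improper v (beta (cs ! i)) (map beta (drop (Suc i) cs))"
  by (simp add: improper_child_def is_improper_def is_elder_iff_has_smaller drop_map)

text \<open>Splitting the improper edge from \<open>v\<close> to its child \<open>c = cs ! i\<close>: the new vertex \<open>N\<close>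
  takes the place of \<open>v\<close>, keeps the brothers to the left of \<open>c\<close>, and gets \<open>c\<close> and \<open>v\<close>
  (with the brothers to the right of \<open>c\<close>) as its last two children, in either order.\<close>

definition split_edge :: "nat \<Rightarrow> nat \<Rightarrow> ptree list \<Rightarrow> nat \<Rightarrow> ptree list" where
  "split_edge N v cs i =
     [PNode N (take i cs @ [cs ! i, PNode v (drop (Suc i) cs)]),
      PNode N (take i cs @ [PNode v (drop (Suc i) cs), cs ! i])]"

definition edge_insertions :: "nat \<Rightarrow> nat \<Rightarrow> ptree list \<Rightarrow> ptree list" where
  "edge_insertions N v cs = concat (map (split_edge N v cs) (filter (improper_child v cs) [0..<length cs]))"

function insertions :: "nat \<Rightarrow> ptree \<Rightarrow> ptree list" where
  "insertions N (PNode v cs) =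
     PNode N [PNode v cs] # leaf_insertions N v cs @ edge_insertions N v cs
     @ concat (map (\<lambda>i. map (\<lambda>s. PNode v (cs[i := s])) (insertions N (cs ! i))) [0..<length cs])"
  by pat_completeness auto
termination
  by (relation "measure (size \<circ> snd)") (auto simp: less_Suc_eq_le intro!: size_list_estimation')

lemma mem_insertions:
  "s \<in> set (insertions N (PNode v cs)) \<longleftrightarrow>
     s = PNode N [PNode v cs]
   \<or> (\<exists>A B. cs = A @ B \<and> s = PNode v (A @ PNode N [] # B))
   \<or> (\<exists>A c B. cs = A @ c # B \<and> is_improper v (beta c) (map beta B) \<and>
        (s = PNode N (A @ [c, PNode v B]) \<or> s = PNode N (A @ [PNode v B, c])))
   \<or> (\<exists>A c B s'. cs = A @ c # B \<and> s' \<in> set (insertions N c) \<and> s = PNode v (A @ s' # B))"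
proof -
  have leaf: "s \<in> set (leaf_insertions N v cs) \<longleftrightarrow> (\<exists>A B. cs = A @ B \<and> s = PNode v (A @ PNode N [] # B))"
    unfolding leaf_insertions_def ex_take_drop_iff[symmetric]
    by (auto simp: less_Suc_eq_le simp del: upt_Suc)
  have edge: "s \<in> set (edge_insertions N v cs) \<longleftrightarrow> (\<exists>A c B. cs = A @ c # B \<and> is_improper v (beta c) (map beta B) \<and>
        (s = PNode N (A @ [c, PNode v B]) \<or> s = PNode N (A @ [PNode v B, c])))"
    unfolding edge_insertions_def split_edge_def ex_take_nth_drop_iff[symmetric]
    by (auto simp: improper_child_iff)
  have "s \<in> set (concat (map (\<lambda>i. map (\<lambda>s. PNode v (cs[i := s])) (insertions N (cs ! i))) [0..<length cs]))
      \<longleftrightarrow> (\<exists>i<length cs. \<exists>s'\<in>set (insertions N (cs ! i)). s = PNode v (take i cs @ s' # drop (Suc i) cs))"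
    by (auto simp: upd_conv_take_nth_drop)
  also have "\<dots> \<longleftrightarrow> (\<exists>A c B. cs = A @ c # B \<and> (\<exists>s'\<in>set (insertions N c). s = PNode v (A @ s' # B)))"
    by (rule ex_take_nth_drop_iff)
  finally have subtree: "s \<in> set (concat (map (\<lambda>i. map (\<lambda>s. PNode v (cs[i := s])) (insertions N (cs ! i))) [0..<length cs]))
      \<longleftrightarrow> (\<exists>A c B s'. cs = A @ c # B \<and> s' \<in> set (insertions N c) \<and> s = PNode v (A @ s' # B))"
    by blast
  show ?thesis
    unfolding insertions.simps set_simps set_append Un_iff insert_iff leaf edge subtree ..
qed

lemma insertions_cases [consumes 1, case_names new_root leaf split split_swapped subtree]:
  assumes "s \<in> set (insertions N (PNode v cs))"
  obtains "s = PNode N [PNode v cs]"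
  | A B where "cs = A @ B" "s = PNode v (A @ PNode N [] # B)"
  | A c B where "cs = A @ c # B" "is_improper v (beta c) (map beta B)" "s = PNode N (A @ [c, PNode v B])"
  | A c B where "cs = A @ c # B" "is_improper v (beta c) (map beta B)" "s = PNode N (A @ [PNode v B, c])"
  | A c B s' where "cs = A @ c # B" "s' \<in> set (insertions N c)" "s = PNode v (A @ s' # B)"
  using assms unfolding mem_insertions by (elim disjE exE conjE; simp only: that)

lemma insertions_new_root: "PNode N [s] \<in> set (insertions N s)"
  by (cases s) simp

lemma insertions_leaf: "PNode v (A @ PNode N [] # B) \<in> set (insertions N (PNode v (A @ B)))"
  unfolding mem_insertions by blast

lemma insertions_split:
  "is_improper v (beta c) (map beta B) \<Longrightarrow> PNode N (A @ [c, PNode v B]) \<in> set (insertions N (PNode v (A @ c # B)))"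
  unfolding mem_insertions by blast

lemma insertions_split_swapped:
  "is_improper v (beta c) (map beta B) \<Longrightarrow> PNode N (A @ [PNode v B, c]) \<in> set (insertions N (PNode v (A @ c # B)))"
  unfolding mem_insertions by blast

lemma insertions_subtree:
  "s \<in> set (insertions N c) \<Longrightarrow> PNode v (A @ s # B) \<in> set (insertions N (PNode v (A @ c # B)))"
  unfolding mem_insertions by blast

lemma mset_labels_insertions:
  "s' \<in> set (insertions N s) \<Longrightarrow> mset (labels s') = add_mset N (mset (labels s))"
proof (induction s arbitrary: s')
  case (PNode v cs)
  from PNode.prems show ?case
  proof (cases rule: insertions_cases)
    case (subtree A c B s'')
    then have "mset (labels s'') = add_mset N (mset (labels c))"
      by (intro PNode.IH) simp_all
    then show ?thesis using subtree by (simp add: add_mset_commute)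
  qed (simp_all add: add_mset_commute)
qed

lemma insertions_not_leaf: "s' \<in> set (insertions N s) \<Longrightarrow> s' \<noteq> PNode N []"
proof
  assume "s' \<in> set (insertions N s)" "s' = PNode N []"
  then have "mset (labels s) = {#}" using mset_labels_insertions by fastforce
  then show False using labels_not_Nil by simp
qed

lemma label_in_insertions: "s' \<in> set (insertions N s) \<Longrightarrow> N \<in> set (labels s')"
  using mset_labels_insertions by (metis insertI1 set_mset_add_mset_insert set_mset_mset)

lemma beta_insertions:
  assumes "s' \<in> set (insertions N s)" and "\<forall>l\<in>set (labels s). l < N"
  shows "beta s' = beta s"
proof (rule beta_eqI)
  have labels: "set (labels s') = insert N (set (labels s))"
    using mset_labels_insertions[OF assms(1)] by (metis set_mset_add_mset_insert set_mset_mset)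
  then show "beta s \<in> set (labels s')" using beta_in_labels[of s] by simp
  show "beta s \<le> l" if "l \<in> set (labels s')" for l
    using that labels assms(2) beta_in_labels[of s] beta_le[of _ s] by fastforce
qed

lemma distinct_leaf_insertions:
  assumes "PNode N [] \<notin> set cs"
  shows "distinct (leaf_insertions N v cs)"
proof -
  have take: "takeWhile (\<lambda>c. c \<noteq> PNode N []) (take i cs @ PNode N [] # drop i cs) = take i cs" for i
    using assms by (subst takeWhile_append2) (auto dest: in_set_takeD)
  have inj: "i = j" if "i \<le> length cs" "j \<le> length cs"
    and "take i cs @ PNode N [] # drop i cs = take j cs @ PNode N [] # drop j cs" for i j
  proof -
    have "take i cs = take j cs" using that(3) take[of i] take[of j] by simp
    then have "length (take i cs) = length (take j cs)" by simp
    then show ?thesis using that(1,2) by simp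
  qed
  show ?thesis
    unfolding leaf_insertions_def distinct_map
    by (auto simp: less_Suc_eq_le simp del: upt_Suc intro!: inj_onI inj)
qed

lemma distinct_edge_insertions:
  assumes "v \<notin> set (concat (map labels cs))"
  shows "distinct (edge_insertions N v cs)"
  unfolding edge_insertions_def
proof (rule distinct_concat_map)
  fix i assume "i \<in> set (filter (improper_child v cs) [0..<length cs])"
  then have "v \<notin> set (labels (cs ! i))" using assms by auto
  then have "cs ! i \<noteq> PNode v (drop (Suc i) cs)" by auto
  then show "distinct (split_edge N v cs i)" by (simp add: split_edge_def)
next
  have kids: "length (kids s) = k + 2" if "k < length cs" "s \<in> set (split_edge N v cs k)" for k s
    using that by (auto simp: split_edge_def)
  fix i j assume "i \<in> set (filter (improper_child v cs) [0..<length cs])"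
    and "j \<in> set (filter (improper_child v cs) [0..<length cs])" and "i \<noteq> j"
  then show "set (split_edge N v cs i) \<inter> set (split_edge N v cs j) = {}"
    using kids[of i] kids[of j] by fastforce
qed simp

lemma distinct_subtree_insertions:
  assumes "\<And>i. i < length cs \<Longrightarrow> distinct (f i)" and "\<And>i. i < length cs \<Longrightarrow> cs ! i \<notin> set (f i)"
  shows "distinct (concat (map (\<lambda>i. map (\<lambda>s. PNode v (cs[i := s])) (f i)) [0..<length cs]))"
proof (rule distinct_concat_map)
  fix i assume "i \<in> set [0..<length cs]"
  then have i: "i < length cs" by simp
  have "inj_on (\<lambda>s. PNode v (cs[i := s])) (set (f i))"
    by (rule inj_onI) (metis i nth_list_update_eq ptree.inject)
  then show "distinct (map (\<lambda>s. PNode v (cs[i := s])) (f i))"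
    using assms(1)[OF i] by (simp add: distinct_map)
next
  fix i j assume "i \<in> set [0..<length cs]" "j \<in> set [0..<length cs]" and ij: "i \<noteq> j"
  then have i: "i < length cs" by simp
  show "set (map (\<lambda>s. PNode v (cs[i := s])) (f i)) \<inter> set (map (\<lambda>s. PNode v (cs[j := s])) (f j)) = {}"
  proof (rule ccontr)
    assume "\<not> ?thesis"
    then obtain a b where "a \<in> set (f i)" "PNode v (cs[i := a]) = PNode v (cs[j := b])" by auto
    moreover from this have "a = cs ! i" using i ij by (metis nth_list_update_eq nth_list_update_neq ptree.inject)
    ultimately show False using assms(2)[OF i] by simp
  qed
qed simp

lemma leaf_insertions_shape:
  "s \<in> set (leaf_insertions N v cs) \<Longrightarrow> root s = v \<and> length (kids s) = Suc (length cs)"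
  by (auto simp: leaf_insertions_def)

lemma edge_insertions_shape:
  "s \<in> set (edge_insertions N v cs) \<Longrightarrow> root s = N \<and> 2 \<le> length (kids s)"
  by (auto simp: edge_insertions_def split_edge_def)

lemma distinct_insertions:
  "distinct (labels s) \<Longrightarrow> N \<notin> set (labels s) \<Longrightarrow> distinct (insertions N s)"
proof (induction s)
  case (PNode v cs)
  define subtree where
    "subtree = concat (map (\<lambda>i. map (\<lambda>s. PNode v (cs[i := s])) (insertions N (cs ! i))) [0..<length cs])"
  have subtree_shape: "root s = v \<and> length (kids s) = length cs" if "s \<in> set subtree" for s
    using that by (auto simp: subtree_def)
  have "v \<noteq> N" using PNode.prems(2) by simp
  have "distinct (leaf_insertions N v cs)"
    using PNode.prems(2) by (intro distinct_leaf_insertions) auto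
  moreover have "distinct (edge_insertions N v cs)"
    using PNode.prems(1) by (intro distinct_edge_insertions) auto
  moreover have "distinct subtree"
    unfolding subtree_def
  proof (rule distinct_subtree_insertions)
    fix i assume "i < length cs"
    then have i: "cs ! i \<in> set cs" by simp
    then show "distinct (insertions N (cs ! i))"
      using PNode.prems distinct_labels_child[OF PNode.prems(1) i] by (intro PNode.IH) auto
    show "cs ! i \<notin> set (insertions N (cs ! i))"
      using PNode.prems(2) i label_in_insertions by fastforce
  qed
  moreover have "s \<notin> set (edge_insertions N v cs) \<and> s \<notin> set subtree" if "s \<in> set (leaf_insertions N v cs)" for s
    using leaf_insertions_shape[OF that] edge_insertions_shape[of s] subtree_shape[of s] \<open>v \<noteq> N\<close> by auto
  moreover have "s \<notin> set subtree" if "s \<in> set (edge_insertions N v cs)" for s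
    using edge_insertions_shape[OF that] subtree_shape[of s] \<open>v \<noteq> N\<close> by auto
  moreover have "PNode N [PNode v cs] \<notin> set (leaf_insertions N v cs) \<union> set (edge_insertions N v cs) \<union> set subtree"
    using leaf_insertions_shape[of "PNode N [PNode v cs]"] edge_insertions_shape[of "PNode N [PNode v cs]"]
      subtree_shape[of "PNode N [PNode v cs]"] \<open>v \<noteq> N\<close> by auto
  moreover have "insertions N (PNode v cs) =
      PNode N [PNode v cs] # leaf_insertions N v cs @ edge_insertions N v cs @ subtree"
    by (simp add: subtree_def)
  ultimately show ?case
    by (auto simp: distinct_append)
qed

section \<open>Deleting the largest label\<close>

text \<open>Deleting a root with children \<open>L @ [a, b]\<close> undoes \<open>split_edge\<close>: of \<open>a\<close> and \<open>b\<close>, the one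
  with the larger beta is the old parent, and it takes back \<open>L\<close> and the other one as its first children.\<close>

definition delete_root :: "ptree list \<Rightarrow> ptree" where
  "delete_root cs = (if length cs = 1 then hd cs else
     (let a = cs ! (length cs - 2); b = last cs; L = take (length cs - 2) cs in
      if beta a < beta b then PNode (root b) (L @ a # kids b) else PNode (root a) (L @ b # kids a)))"

fun delete_vertex :: "nat \<Rightarrow> ptree \<Rightarrow> ptree" where
  "delete_vertex N (PNode v cs) = (if v = N then delete_root cs
     else PNode v (concat (map (\<lambda>c. if c = PNode N [] then [] else [delete_vertex N c]) cs)))"

lemma delete_vertex_id: "N \<notin> set (labels s) \<Longrightarrow> delete_vertex N s = s"
proof (induction s)
  case (PNode v cs)
  then have "concat (map (\<lambda>c. if c = PNode N [] then [] else [delete_vertex N c]) cs) = cs"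
    by (intro concat_map_eq_self) auto
  with PNode.prems show ?case by simp
qed

lemma delete_vertex_children:
  "N \<notin> set (concat (map labels cs)) \<Longrightarrow>
   concat (map (\<lambda>c. if c = PNode N [] then [] else [delete_vertex N c]) cs) = cs"
  by (intro concat_map_eq_self) (auto simp: delete_vertex_id)

lemma is_improper_beta_less:
  assumes "distinct (labels (PNode v (A @ c # B)))" and "is_improper v (beta c) (map beta B)"
  shows "beta c < v" and "\<And>b. b \<in> set B \<Longrightarrow> beta c < beta b" and "beta c < beta (PNode v B)"
proof -
  have "beta c \<noteq> v" using assms(1) beta_in_labels[of c] by auto
  then show v: "beta c < v" using assms(2) by (auto simp: is_improper_def)
  have "beta c \<noteq> beta b" if "b \<in> set B" for b
    using assms(1) beta_in_labels[of c] beta_in_labels[of b] that by (auto simp: distinct_append)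
  then show b: "\<And>b. b \<in> set B \<Longrightarrow> beta c < beta b"
    using assms(2) by (force simp: is_improper_def has_smaller_def)
  have "beta (PNode v B) = v \<or> (\<exists>b\<in>set B. beta b \<le> beta (PNode v B))"
    using beta_in_labels[of "PNode v B"] beta_le by auto
  then show "beta c < beta (PNode v B)" using v b by force
qed

lemma delete_root_split:
  assumes "distinct (labels (PNode v (A @ c # B)))" and "is_improper v (beta c) (map beta B)"
  shows "delete_root (A @ [c, PNode v B]) = PNode v (A @ c # B)"
    and "delete_root (A @ [PNode v B, c]) = PNode v (A @ c # B)"
  using is_improper_beta_less(3)[OF assms] by (simp_all add: delete_root_def nth_append)

lemma delete_vertex_insertions:
  assumes "distinct (labels s)" and "N \<notin> set (labels s)" and "s' \<in> set (insertions N s)"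
  shows "delete_vertex N s' = s"
  using assms
proof (induction s arbitrary: s')
  case (PNode v cs)
  from PNode.prems(3) show ?case
  proof (cases rule: insertions_cases)
    case new_root
    then show ?thesis by (simp add: delete_root_def)
  next
    case (leaf A B)
    then show ?thesis using PNode.prems(2) by (simp add: delete_vertex_children)
  next
    case (split A c B)
    then show ?thesis using PNode.prems(1) by (simp add: delete_root_split)
  next
    case (split_swapped A c B)
    then show ?thesis using PNode.prems(1) by (simp add: delete_root_split)
  next
    case (subtree A c B s'')
    then have "delete_vertex N s'' = c"
      using PNode.prems(1,2) by (intro PNode.IH) (auto simp: distinct_append)
    then show ?thesis
      using subtree PNode.prems(2) insertions_not_leaf[OF subtree(2)] by (simp add: delete_vertex_children)
  qed
qed

lemma insertions_delete_root:
  assumes "distinct (labels (PNode N cs))" and "cs \<noteq> []"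
  shows "PNode N cs \<in> set (insertions N (delete_root cs))"
proof (cases "length cs = 1")
  case True
  then obtain c where "cs = [c]" by (auto simp: length_Suc_conv)
  then show ?thesis by (simp add: delete_root_def insertions_new_root)
next
  case False
  obtain L a b where cs: "cs = L @ [a, b]"
  proof -
    obtain ys b where ys: "cs = ys @ [b]" using assms(2) by (cases cs rule: rev_cases) auto
    with False obtain L a where "ys = L @ [a]" by (cases ys rule: rev_cases) auto
    with ys show thesis using that by simp
  qed
  have "beta a \<noteq> beta b"
    using assms(1) beta_in_labels[of a] beta_in_labels[of b] by (auto simp: cs distinct_append)
  show ?thesis
  proof (cases "beta a < beta b")
    case True
    obtain u R where b: "b = PNode u R" by (cases b)
    have "is_improper u (beta a) (map beta R)"
      using True beta_PNode_le_child[of _ R u] beta_PNode_le_root[of u R]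
      by (force simp: b is_improper_def has_smaller_def)
    then have "PNode N (L @ [a, PNode u R]) \<in> set (insertions N (PNode u (L @ a # R)))"
      by (rule insertions_split)
    then show ?thesis using True by (simp add: cs b delete_root_def nth_append)
  next
    case False
    with \<open>beta a \<noteq> beta b\<close> have "beta b < beta a" by simp
    obtain u R where a: "a = PNode u R" by (cases a)
    have "is_improper u (beta b) (map beta R)"
      using \<open>beta b < beta a\<close> beta_PNode_le_child[of _ R u] beta_PNode_le_root[of u R]
      by (force simp: a is_improper_def has_smaller_def)
    then have "PNode N (L @ [PNode u R, b]) \<in> set (insertions N (PNode u (L @ b # R)))"
      by (rule insertions_split_swapped)
    then show ?thesis using False by (simp add: cs a delete_root_def nth_append)
  qed
qed

lemma insertions_delete_vertex:
  assumes "distinct (labels T)" and "N \<in> set (labels T)" and "T \<noteq> PNode N []"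
  shows "T \<in> set (insertions N (delete_vertex N T))"
  using assms
proof (induction T)
  case (PNode v cs)
  show ?case
  proof (cases "v = N")
    case True
    then show ?thesis using PNode.prems insertions_delete_root[of N cs] by auto
  next
    case False
    then obtain c where "c \<in> set cs" and c: "N \<in> set (labels c)" using PNode.prems(2) by auto
    then obtain A B where cs: "cs = A @ c # B" by (meson split_list)
    have AB: "N \<notin> set (concat (map labels A))" "N \<notin> set (concat (map labels B))"
      using PNode.prems(1) c cs by (auto simp: distinct_append)
    show ?thesis
    proof (cases "c = PNode N []")
      case True
      then show ?thesis using insertions_leaf[of v A N B] False AB cs by (simp add: delete_vertex_children)
    next
      case nonleaf: False
      have "c \<in> set (insertions N (delete_vertex N c))"
        using PNode.IH[of c] PNode.prems(1) c cs nonleaf by (simp add: distinct_append)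
      then show ?thesis
        using insertions_subtree[of c N _ v A B] False AB cs nonleaf by (simp add: delete_vertex_children)
    qed
  qed
qed

section \<open>Weight of the insertions\<close>

lemma tree_weight_new_root:
  assumes "N \<noteq> 1" and "beta s < N"
  shows "tree_weight x t (PNode N [s]) = [:0, 1:] * tree_weight x t s"
  using assms by (simp add: tree_weight_PNode node_weight_def is_improper_def has_smaller_def monom_Suc)

lemma tree_weight_insert_leaf:
  assumes "\<forall>c\<in>set (A @ B). beta c < N" and "v < N" and "N \<noteq> 1"
  shows "tree_weight x t (PNode v (A @ PNode N [] # B)) =
    smult (if B = [] then (if v = 1 then x else 1) else t) (tree_weight x t (PNode v (A @ B)))"
proof -
  have "node_weight x t v (map beta A @ N # map beta B) =
      smult (if B = [] then (if v = 1 then x else 1) else t) (node_weight x t v (map beta A @ map beta B))"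
    using assms by (subst node_weight_insert_max) auto
  then show ?thesis
    using assms(3) by (simp add: tree_weight_PNode beta_leaf node_weight_Nil)
qed

lemma sum_leaf_insertions_weight:
  assumes "\<forall>c\<in>set cs. beta c < N" and "v < N" and "N \<noteq> 1"
  shows "sum_list (map (tree_weight x t) (leaf_insertions N v cs)) =
    smult ((if v = 1 then x else 1) + real (length cs) * t) (tree_weight x t (PNode v cs))"
proof -
  define a where "a = (if v = 1 then x else 1)"
  let ?W = "tree_weight x t (PNode v cs)"
  have "tree_weight x t (PNode v (take i cs @ PNode N [] # drop i cs)) = smult (if i = length cs then a else t) ?W"
    if "i \<le> length cs" for i
    using tree_weight_insert_leaf[of "take i cs" "drop i cs"] assms that unfolding a_def
    by (auto dest: in_set_takeD in_set_dropD)
  then have "sum_list (map (tree_weight x t) (leaf_insertions N v cs)) =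
      sum_list (map (\<lambda>i. smult (if i = length cs then a else t) ?W) [0..<Suc (length cs)])"
    unfolding leaf_insertions_def map_map comp_def
    by (intro arg_cong[where f = sum_list] map_cong) (auto simp del: upt_Suc)
  also have "\<dots> = sum_list (map (\<lambda>i. smult t ?W) [0..<length cs]) + smult a ?W"
  proof -
    have "map (\<lambda>i. smult (if i = length cs then a else t) ?W) [0..<length cs] = map (\<lambda>i. smult t ?W) [0..<length cs]"
      by (intro map_cong) auto
    moreover have "[0..<Suc (length cs)] = [0..<length cs] @ [length cs]" by simp
    ultimately show ?thesis by (simp only: map_append sum_list_append) simp
  qed
  also have "\<dots> = smult (a + real (length cs) * t) ?W"
    by (simp add: sum_list_triv smult_add_left of_nat_poly mult.commute)
  finally show ?thesis unfolding a_def .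
qed

lemma tree_weight_split_edge:
  assumes "distinct (labels (PNode v (A @ c # B)))" and "\<forall>l\<in>set (labels (PNode v (A @ c # B))). 0 < l \<and> l < N"
    and "is_improper v (beta c) (map beta B)"
  shows "tree_weight x t (PNode N (A @ [c, PNode v B])) + tree_weight x t (PNode N (A @ [PNode v B, c])) =
    [:t, 1:] * tree_weight x t (PNode v (A @ c # B))"
proof -
  note less = is_improper_beta_less[OF assms(1,3)]
  have beta_less_N: "beta a < N" if "a \<in> set (A @ c # B)" for a
    using assms(2) beta_in_labels[of a] that by fastforce
  have "0 < beta c" using assms(2) beta_in_labels[of c] by auto
  then have "v \<noteq> 1" using less(1) by simp
  have "beta (PNode v B) < N" "N \<noteq> 1" using beta_PNode_le_root[of v B] assms(2) by auto
  have node: "node_weight x t N (map beta A @ [beta c, beta (PNode v B)]) * node_weight x t v (map beta B)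
        = [:0, 1:] * node_weight x t v (map beta A @ beta c # map beta B)"
      "node_weight x t N (map beta A @ [beta (PNode v B), beta c]) * node_weight x t v (map beta B)
        = smult t (node_weight x t v (map beta A @ beta c # map beta B))"
    by (rule node_weight_split;
        use less beta_less_N \<open>v \<noteq> 1\<close> \<open>beta (PNode v B) < N\<close> \<open>N \<noteq> 1\<close> in auto)+
  let ?R = "prod_list (map (tree_weight x t) A) * tree_weight x t c * prod_list (map (tree_weight x t) B)"
  have "tree_weight x t (PNode N (A @ [c, PNode v B])) =
      node_weight x t N (map beta A @ [beta c, beta (PNode v B)]) * node_weight x t v (map beta B) * ?R"
    "tree_weight x t (PNode N (A @ [PNode v B, c])) =
      node_weight x t N (map beta A @ [beta (PNode v B), beta c]) * node_weight x t v (map beta B) * ?R"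
    "tree_weight x t (PNode v (A @ c # B)) = node_weight x t v (map beta A @ beta c # map beta B) * ?R"
    by (simp_all add: tree_weight_PNode mult_ac)
  then show ?thesis unfolding node by (simp add: algebra_simps)
qed

lemma sum_edge_insertions_weight:
  assumes "distinct (labels (PNode v cs))" and "\<forall>l\<in>set (labels (PNode v cs)). 0 < l \<and> l < N"
  shows "sum_list (map (tree_weight x t) (edge_insertions N v cs)) =
    smult (real (improper_node v cs)) ([:t, 1:] * tree_weight x t (PNode v cs))"
proof -
  let ?W = "tree_weight x t (PNode v cs)"
  have "sum_list (map (tree_weight x t) (split_edge N v cs i)) = [:t, 1:] * ?W"
    if "i < length cs" "improper_child v cs i" for i
    using tree_weight_split_edge[of v "take i cs" "cs ! i" "drop (Suc i) cs" N x t] assms that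
    by (simp add: split_edge_def improper_child_iff id_take_nth_drop[symmetric])
  then have "sum_list (map (tree_weight x t) (edge_insertions N v cs)) =
      sum_list (map (\<lambda>i. [:t, 1:] * ?W) (filter (improper_child v cs) [0..<length cs]))"
    unfolding edge_insertions_def map_concat sum_list_concat map_map comp_def
    by (intro arg_cong[where f = sum_list] map_cong) auto
  also have "\<dots> = of_nat (length (filter (improper_child v cs) [0..<length cs])) * ([:t, 1:] * ?W)"
    by (rule sum_list_triv)
  also have "length (filter (improper_child v cs) [0..<length cs]) = improper_node v cs"
    by (simp add: length_filter_conv_card improper_node_def improper_child_def cong: conj_cong)
  finally show ?thesis by (simp add: of_nat_poly)
qed

lemma sum_tree_weight_replace_child:
  assumes "\<And>s. s \<in> set ss \<Longrightarrow> beta s = beta c"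
    and "sum_list (map (tree_weight x t) ss) = M * tree_weight x t c"
  shows "sum_list (map (\<lambda>s. tree_weight x t (PNode v (A @ s # B))) ss) = M * tree_weight x t (PNode v (A @ c # B))"
proof -
  define K where "K = node_weight x t v (map beta (A @ c # B)) *
    prod_list (map (tree_weight x t) A) * prod_list (map (tree_weight x t) B)"
  have weight: "tree_weight x t (PNode v (A @ s # B)) = K * tree_weight x t s" if "beta s = beta c" for s
    using that by (simp add: K_def tree_weight_PNode mult_ac)
  have "sum_list (map (\<lambda>s. tree_weight x t (PNode v (A @ s # B))) ss) = sum_list (map (\<lambda>s. K * tree_weight x t s) ss)"
    using assms(1) weight by (intro arg_cong[where f = sum_list] map_cong) auto
  also have "\<dots> = K * (M * tree_weight x t c)"
    by (simp add: sum_list_const_mult assms(2))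
  also have "\<dots> = M * tree_weight x t (PNode v (A @ c # B))"
    by (simp add: weight mult_ac)
  finally show ?thesis .
qed

lemma sum_subtree_insertions_weight:
  assumes "\<And>i s. i < length cs \<Longrightarrow> s \<in> set (f i) \<Longrightarrow> beta s = beta (cs ! i)"
    and "\<And>i. i < length cs \<Longrightarrow> sum_list (map (tree_weight x t) (f i)) = M (cs ! i) * tree_weight x t (cs ! i)"
  shows "sum_list (map (tree_weight x t) (concat (map (\<lambda>i. map (\<lambda>s. PNode v (cs[i := s])) (f i)) [0..<length cs])))
    = sum_list (map M cs) * tree_weight x t (PNode v cs)"
proof -
  let ?W = "tree_weight x t (PNode v cs)"
  have "sum_list (map (\<lambda>s. tree_weight x t (PNode v (cs[i := s]))) (f i)) = M (cs ! i) * ?W"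
    if "i < length cs" for i
    using sum_tree_weight_replace_child[of "f i" "cs ! i" x t "M (cs ! i)" v "take i cs" "drop (Suc i) cs"]
      assms(1)[OF that] assms(2)[OF that]
    by (simp add: upd_conv_take_nth_drop[OF that] id_take_nth_drop[OF that, symmetric])
  then have "sum_list (map (tree_weight x t) (concat (map (\<lambda>i. map (\<lambda>s. PNode v (cs[i := s])) (f i)) [0..<length cs])))
      = sum_list (map (\<lambda>i. M (cs ! i) * ?W) [0..<length cs])"
    unfolding map_concat sum_list_concat map_map comp_def
    by (intro arg_cong[where f = sum_list] map_cong) auto
  also have "\<dots> = sum_list (map (\<lambda>i. M (cs ! i)) [0..<length cs]) * ?W"
    by (rule sum_list_mult_const)
  also have "map (\<lambda>i. M (cs ! i)) [0..<length cs] = map M cs"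
    by (rule nth_equalityI) auto
  finally show ?thesis .
qed

definition vertex_x_sum :: "real \<Rightarrow> ptree \<Rightarrow> real" where
  "vertex_x_sum x s = sum_list (map (\<lambda>l. if l = 1 then x else 1) (labels s))"

text \<open>Leaf insertions below a vertex \<open>u\<close> with \<open>d\<close> children contribute \<open>(if u = 1 then x else 1) + d t\<close>,
  new roots one \<open>y\<close> for each of the \<open>|s|\<close> subtrees, and edge splits \<open>y + t\<close> per improper edge.\<close>

definition insertion_factor :: "real \<Rightarrow> real \<Rightarrow> ptree \<Rightarrow> real poly" where
  "insertion_factor x t s =
     [:vertex_x_sum x s + t * (real (length (labels s)) - 1):]
     + smult (real (length (labels s))) [:0, 1:] + smult (real (improper s)) [:t, 1:]"

lemma sum_list_insertion_factor:
  "sum_list (map (insertion_factor x t) cs) =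
     [:sum_list (map (vertex_x_sum x) cs) + t * (real (sum_list (map (\<lambda>c. length (labels c)) cs)) - real (length cs)):]
   + smult (real (sum_list (map (\<lambda>c. length (labels c)) cs))) [:0, 1:]
   + smult (real (sum_list (map improper cs))) [:t, 1:]"
  by (induction cs) (simp_all add: insertion_factor_def smult_add_left algebra_simps)

lemma insertion_factor_PNode:
  "insertion_factor x t (PNode v cs) =
     [:0, 1:] + [:(if v = 1 then x else 1) + real (length cs) * t:]
     + smult (real (improper_node v cs)) [:t, 1:] + sum_list (map (insertion_factor x t) cs)"
proof -
  have "vertex_x_sum x (PNode v cs) = (if v = 1 then x else 1) + sum_list (map (vertex_x_sum x) cs)"
    unfolding vertex_x_sum_def by (simp add: map_concat sum_list_concat comp_def)
  moreover have "length (labels (PNode v cs)) = Suc (sum_list (map (\<lambda>c. length (labels c)) cs))"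
    by (simp add: length_concat comp_def)
  ultimately show ?thesis
    unfolding sum_list_insertion_factor insertion_factor_def improper_PNode
    by (simp add: smult_add_left algebra_simps)
qed

lemma sum_insertions_weight:
  assumes "distinct (labels s)" and "\<forall>l\<in>set (labels s). 0 < l \<and> l < N"
  shows "sum_list (map (tree_weight x t) (insertions N s)) = insertion_factor x t s * tree_weight x t s"
  using assms
proof (induction s)
  case (PNode v cs)
  let ?W = "tree_weight x t (PNode v cs)"
  have "v < N" "N \<noteq> 1" and beta_less: "\<forall>c\<in>set cs. beta c < N"
    using PNode.prems(2) beta_in_labels by fastforce+
  have new_root: "tree_weight x t (PNode N [PNode v cs]) = [:0, 1:] * ?W"
    using \<open>v < N\<close> \<open>N \<noteq> 1\<close> beta_PNode_le_root[of v cs] by (intro tree_weight_new_root) auto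
  have subtrees: "sum_list (map (tree_weight x t) (concat (map (\<lambda>i. map (\<lambda>s. PNode v (cs[i := s]))
      (insertions N (cs ! i))) [0..<length cs]))) = sum_list (map (insertion_factor x t) cs) * ?W"
  proof (rule sum_subtree_insertions_weight)
    fix i assume "i < length cs"
    then have c: "cs ! i \<in> set cs" by simp
    show "beta s = beta (cs ! i)" if "s \<in> set (insertions N (cs ! i))" for s
      using that PNode.prems(2) c by (intro beta_insertions) auto
    show "sum_list (map (tree_weight x t) (insertions N (cs ! i))) =
        insertion_factor x t (cs ! i) * tree_weight x t (cs ! i)"
      using PNode.prems distinct_labels_child[OF PNode.prems(1) c] c by (intro PNode.IH) auto
  qed
  have "sum_list (map (tree_weight x t) (insertions N (PNode v cs))) =
      [:0, 1:] * ?W + smult ((if v = 1 then x else 1) + real (length cs) * t) ?W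
      + smult (real (improper_node v cs)) ([:t, 1:] * ?W) + sum_list (map (insertion_factor x t) cs) * ?W"
    using new_root sum_leaf_insertions_weight[OF beta_less \<open>v < N\<close> \<open>N \<noteq> 1\<close>]
      sum_edge_insertions_weight[OF PNode.prems] subtrees
    by (simp add: add.assoc)
  also have "\<dots> = insertion_factor x t (PNode v cs) * ?W"
    unfolding insertion_factor_PNode distrib_right mult_smult_left by simp
  finally show ?case .
qed

section \<open>Plane trees on [n] and the polynomials Q_n\<close>

definition labelled_trees :: "nat \<Rightarrow> ptree set" where
  "labelled_trees n = {T. distinct (labels T) \<and> set (labels T) = {1..n}}"

definition tree_poly :: "real \<Rightarrow> real \<Rightarrow> nat \<Rightarrow> real poly" where
  "tree_poly x t n = (\<Sum>T\<in>labelled_trees n. tree_weight x t T)"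

lemma labelled_trees_one: "labelled_trees (Suc 0) = {PNode 1 []}"
proof (intro equalityI subsetI)
  fix T assume "T \<in> labelled_trees (Suc 0)"
  then have "distinct (labels T)" and labels: "set (labels T) = {1}" by (auto simp: labelled_trees_def)
  then have "length (labels T) = 1" using distinct_card by fastforce
  moreover obtain v cs where T: "T = PNode v cs" by (cases T)
  ultimately have "cs = []" "v = 1" using labels labels_not_Nil by (auto simp: length_concat sum_list_eq_0_iff)
  then show "T \<in> {PNode 1 []}" using T by simp
qed (simp add: labelled_trees_def)

lemma mem_labelled_trees_Suc_iff:
  assumes "mset (labels T') = mset (Suc n # labels T)"
  shows "T' \<in> labelled_trees (Suc n) \<longleftrightarrow> T \<in> labelled_trees n"
proof -
  have "distinct (labels T') \<longleftrightarrow> Suc n \<notin> set (labels T) \<and> distinct (labels T)"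
    using mset_eq_imp_distinct_iff[OF assms] by simp
  moreover have "set (labels T') = insert (Suc n) (set (labels T))"
    using mset_eq_setD[OF assms] by simp
  moreover have "Suc n \<notin> set (labels T) \<Longrightarrow>
      insert (Suc n) (set (labels T)) = {1..Suc n} \<longleftrightarrow> set (labels T) = {1..n}"
    using insert_ident[of "Suc n" "set (labels T)" "{1..n}"] by (simp add: atLeastAtMostSuc_conv)
  ultimately show ?thesis
    unfolding labelled_trees_def by auto
qed

lemma labelled_trees_Suc:
  assumes "1 \<le> n"
  shows "labelled_trees (Suc n) = (\<Union>T\<in>labelled_trees n. set (insertions (Suc n) T))"
proof (intro equalityI subsetI)
  fix T' assume T': "T' \<in> labelled_trees (Suc n)"
  then have distinct: "distinct (labels T')" and labels: "set (labels T') = {1..Suc n}"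
    by (auto simp: labelled_trees_def)
  have "1 \<in> set (labels T')" using labels by simp
  then have "T' \<noteq> PNode (Suc n) []" using assms by auto
  then have insertion: "T' \<in> set (insertions (Suc n) (delete_vertex (Suc n) T'))"
    using distinct labels by (intro insertions_delete_vertex) auto
  moreover have "delete_vertex (Suc n) T' \<in> labelled_trees n"
    using mem_labelled_trees_Suc_iff[of T' n "delete_vertex (Suc n) T'"] mset_labels_insertions[OF insertion] T'
    by simp
  ultimately show "T' \<in> (\<Union>T\<in>labelled_trees n. set (insertions (Suc n) T))" by blast
next
  fix T' assume "T' \<in> (\<Union>T\<in>labelled_trees n. set (insertions (Suc n) T))"
  then obtain T where "T \<in> labelled_trees n" and T': "T' \<in> set (insertions (Suc n) T)" by blast
  then show "T' \<in> labelled_trees (Suc n)"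
    using mem_labelled_trees_Suc_iff[of T' n T] mset_labels_insertions[OF T'] by simp
qed

lemma finite_labelled_trees: "finite (labelled_trees n)"
proof (cases "n = 0")
  case True
  then have "labelled_trees n = {}" using labels_not_Nil by (auto simp: labelled_trees_def)
  then show ?thesis by simp
next
  case False
  then have "1 \<le> n" by simp
  then show ?thesis
    by (induction n rule: nat_induct_at_least) (simp_all add: labelled_trees_one labelled_trees_Suc)
qed

lemma pderiv_tree_weight:
  "[:0, 1:] * pderiv (tree_weight x t T) = smult (real (improper T)) (tree_weight x t T)"
proof (cases "improper T")
  case 0
  then show ?thesis by (simp add: tree_weight_def pderiv_monom)
next
  case (Suc m)
  have "[:0, 1:] * monom b m = monom b (Suc m)" for b :: real
    by (simp add: monom_Suc)
  then show ?thesis using Suc by (simp add: tree_weight_def pderiv_monom smult_monom)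
qed

lemma insertion_factor_mult_tree_weight:
  assumes "T \<in> labelled_trees n"
  shows "insertion_factor x t T * tree_weight x t T =
    smult (x - t - 1 + real n) (tree_weight x t T)
    + [:t, 1:] * (smult (real n) (tree_weight x t T) + [:0, 1:] * pderiv (tree_weight x t T))"
proof -
  have distinct: "distinct (labels T)" and labels: "set (labels T) = {1..n}"
    using assms by (auto simp: labelled_trees_def)
  then have length: "length (labels T) = n" using distinct_card by fastforce
  then have "1 \<le> n" using labels_not_Nil[of T] by (cases n) auto
  have "vertex_x_sum x T = (\<Sum>l\<in>{1..n}. if l = 1 then x else 1)"
    unfolding vertex_x_sum_def using sum_list_distinct_conv_sum_set[OF distinct] labels by simp
  also have "\<dots> = x + (real n - 1)"
    using \<open>1 \<le> n\<close> by (simp add: sum.atLeast_Suc_atMost)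
  finally have "vertex_x_sum x T = x + (real n - 1)" .
  then have factor: "insertion_factor x t T = [:x + (real n - 1) + t * (real n - 1):]
      + smult (real n) [:0, 1:] + smult (real (improper T)) [:t, 1:]"
    by (simp add: insertion_factor_def length)
  show ?thesis
    unfolding factor pderiv_tree_weight
    by (rule poly_eq_poly_eq_iff[THEN iffD1], rule ext) (simp add: algebra_simps)
qed

lemma tree_poly_Suc:
  assumes "1 \<le> n"
  shows "tree_poly x t (Suc n) = smult (x - t - 1 + real n) (tree_poly x t n)
    + [:t, 1:] * (smult (real n) (tree_poly x t n) + [:0, 1:] * pderiv (tree_poly x t n))"
proof -
  have "set (insertions (Suc n) T1) \<inter> set (insertions (Suc n) T2) = {}"
    if "T1 \<in> labelled_trees n" "T2 \<in> labelled_trees n" "T1 \<noteq> T2" for T1 T2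
    using that delete_vertex_insertions[of T1 "Suc n"] delete_vertex_insertions[of T2 "Suc n"]
    by (fastforce simp: labelled_trees_def)
  then have "tree_poly x t (Suc n) = (\<Sum>T\<in>labelled_trees n. \<Sum>T'\<in>set (insertions (Suc n) T). tree_weight x t T')"
    unfolding tree_poly_def labelled_trees_Suc[OF assms]
    by (intro sum.UNION_disjoint) (auto simp: finite_labelled_trees)
  also have "\<dots> = (\<Sum>T\<in>labelled_trees n. insertion_factor x t T * tree_weight x t T)"
  proof (rule sum.cong)
    fix T assume "T \<in> labelled_trees n"
    then have "distinct (labels T)" "set (labels T) = {1..n}" by (auto simp: labelled_trees_def)
    then show "(\<Sum>T'\<in>set (insertions (Suc n) T). tree_weight x t T') = insertion_factor x t T * tree_weight x t T"
      by (simp add: sum_list_distinct_conv_sum_set[symmetric] distinct_insertions sum_insertions_weight)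
  qed simp
  also have "\<dots> = (\<Sum>T\<in>labelled_trees n. smult (x - t - 1 + real n) (tree_weight x t T)
      + [:t, 1:] * (smult (real n) (tree_weight x t T) + [:0, 1:] * pderiv (tree_weight x t T)))"
    by (intro sum.cong) (simp_all add: insertion_factor_mult_tree_weight)
  also have "\<dots> = smult (x - t - 1 + real n) (tree_poly x t n)
      + [:t, 1:] * (smult (real n) (tree_poly x t n) + [:0, 1:] * pderiv (tree_poly x t n))"
    unfolding tree_poly_def
    by (simp only: sum.distrib sum_distrib_left smult_sum_right pderiv_sum distrib_left)
  finally show ?thesis .
qed

lemma Qy_eq_tree_poly: "1 \<le> n \<Longrightarrow> Qy n (x - t - 1) 1 t = tree_poly x t n"
proof (induction n rule: nat_induct_at_least)
  case base
  show ?case by (simp add: tree_poly_def labelled_trees_one tree_weight_PNode node_weight_def)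
next
  case (Suc n)
  then obtain m where "n = Suc m" by (cases n) auto
  with Suc show ?case by (simp add: Let_def tree_poly_Suc)
qed

theorem theorem2p2:
  fixes n k :: nat and x t :: real
  assumes "1 \<le> n" and "k \<le> n - 1"
  shows "Qnk n k (x - t - 1) t = (\<Sum>T\<in>P n k. x ^ young_at T 1 * t ^ eld T)"
proof -
  have "Qnk n k (x - t - 1) t = (\<Sum>T\<in>labelled_trees n. coeff (tree_weight x t T) k)"
    unfolding Qnk_def Qy_eq_tree_poly[OF assms(1)] tree_poly_def by (rule coeff_sum)
  also have "\<dots> = (\<Sum>T\<in>{T \<in> labelled_trees n. improper T = k}. x ^ young_at T 1 * t ^ eld T)"
    by (simp add: tree_weight_def coeff_monom sum.inter_filter finite_labelled_trees)
  also have "{T \<in> labelled_trees n. improper T = k} = P n k"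
    by (auto simp: P_def labelled_trees_def)
  finally show ?thesis .
qed

end
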